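(* Let $X=\{x_j:j\in J\}\subset\mathbb{R}^2$ be finite with $n=|J|$, quadratic min-power centre $s^*$, centroid $M$, and let $r\in J$ be such that $x_r$ is a point of $X$ farthest from $M$. Then $\|M_r-x_r\|\leq\|s^*-x_r\|$.
   Context: $s^*$ is the unique minimiser of $P(s)=\sum_{i\in J}\|s-x_i\|^2+\max_{i\in J}\|s-x_i\|^2$; $M=\frac1n\sum_ix_i$; $M_r=\frac{1}{n+1}\big(x_r+\sum_{i\in J}x_i\big)$. *)

theory Defs
  imports "HOL-Analysis.Analysis"
begin

definition qmp_P :: "'j set \<Rightarrow> ('j \<Rightarrow> real^2) \<Rightarrow> real^2 \<Rightarrow> real" where
  "qmp_P J x s = (\<Sum>i\<in>J. (norm (s - x i))\<^sup>2) + Max ((\<lambda>i. (norm (s - x i))\<^sup>2) ` J)"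

definition centroid :: "'j set \<Rightarrow> ('j \<Rightarrow> real^2) \<Rightarrow> real^2" where
  "centroid J x = (1 / real (card J)) *\<^sub>R (\<Sum>i\<in>J. x i)"

definition centroid_r :: "'j set \<Rightarrow> ('j \<Rightarrow> real^2) \<Rightarrow> 'j \<Rightarrow> real^2" where
  "centroid_r J x r = (1 / (real (card J) + 1)) *\<^sub>R (x r + (\<Sum>i\<in>J. x i))"

end

theory Submission
  imports Defs
begin

text \<open>Set \<open>Q\<^sub>k(u) = \<Sum>\<^sub>i \<parallel>u - x\<^sub>i\<parallel>\<^sup>2 + \<parallel>u - x\<^sub>k\<parallel>\<^sup>2\<close>; this is \<open>(n+1) \<parallel>u - M\<^sub>k\<parallel>\<^sup>2\<close> up to a constant,
  and \<open>P(t) = Q\<^sub>k(t)\<close> while \<open>P(s) \<ge> Q\<^sub>k(s)\<close> when \<open>k\<close> attains the maximum at \<open>t\<close>. Hence no point \<open>t\<close>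
  is strictly closer than the minimiser \<open>s\<close> to every \<open>M\<^sub>k\<close>. With \<open>v = x\<^sub>r - M\<close>, farthest-ness of
  \<open>x\<^sub>r\<close> gives \<open>v \<bullet> (M\<^sub>r - M\<^sub>k) \<ge> 0\<close>, so if \<open>v \<bullet> (s - M\<^sub>r) > 0\<close> a small step from \<open>s\<close> against \<open>v\<close>
  would approach all \<open>M\<^sub>k\<close> at once. Thus \<open>v \<bullet> (s - M\<^sub>r) \<le> 0\<close>; since \<open>M\<^sub>r - x\<^sub>r\<close> is a negative
  multiple of \<open>v\<close>, the angle at \<open>M\<^sub>r\<close> in the triangle \<open>s M\<^sub>r x\<^sub>r\<close> is not acute.\<close>

lemma power2_norm_diff_scaleR:
  fixes w v :: "'a::real_inner"
  shows "(norm (w - e *\<^sub>R v))\<^sup>2 = (norm w)\<^sup>2 - 2 * e * (v \<bullet> w) + e\<^sup>2 * (v \<bullet> v)"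
  unfolding power2_norm_eq_inner
  by (simp add: inner_diff_left inner_diff_right inner_commute[of w v] power2_eq_square algebra_simps)

lemma power2_norm_diff_sub_power2_norm_diff:
  fixes u s y :: "'a::real_inner"
  shows "(norm (u - y))\<^sup>2 - (norm (s - y))\<^sup>2 = (norm u)\<^sup>2 - (norm s)\<^sup>2 - 2 * ((u - s) \<bullet> y)"
  by (simp add: power2_norm_eq_inner inner_diff_left inner_diff_right inner_commute algebra_simps)

lemma inner_nonneg_if_farthest:
  fixes y z c :: "'a::real_inner"
  assumes "norm (y - c) \<le> norm (z - c)"
  shows "(z - c) \<bullet> (z - y) \<ge> 0"
proof -
  have "(z - c) \<bullet> (z - y) = (z - c) \<bullet> (z - c) - (z - c) \<bullet> (y - c)"
    by (simp add: inner_diff_right)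
  moreover have "(z - c) \<bullet> (y - c) \<le> norm (z - c) * norm (y - c)"
    by (rule norm_cauchy_schwarz)
  moreover have "norm (z - c) * norm (y - c) \<le> norm (z - c) * norm (z - c)"
    using assms by (simp add: mult_left_mono)
  ultimately show ?thesis
    by (simp add: dot_square_norm power2_eq_square)
qed

lemma norm_diff_less_step_against:
  fixes s v c :: "'a::real_inner"
  assumes "d > 0" and "v \<bullet> (s - c) \<ge> d"
  shows "norm (s - (d / (v \<bullet> v)) *\<^sub>R v - c) < norm (s - c)"
proof -
  define e where "e = d / (v \<bullet> v)"
  have "v \<noteq> 0" using assms by auto
  then have vv: "v \<bullet> v > 0" by simp
  have e: "e > 0" "e * (v \<bullet> v) = d" using assms(1) vv by (simp_all add: e_def)
  have "(norm (s - e *\<^sub>R v - c))\<^sup>2 = (norm (s - c))\<^sup>2 - 2 * e * (v \<bullet> (s - c)) + e\<^sup>2 * (v \<bullet> v)"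
    using power2_norm_diff_scaleR[of "s - c" e v] by (simp add: algebra_simps)
  also have "\<dots> \<le> (norm (s - c))\<^sup>2 - e * d"
  proof -
    have "2 * e * d \<le> 2 * e * (v \<bullet> (s - c))"
      using assms(2) e(1) by simp
    moreover have "e\<^sup>2 * (v \<bullet> v) = e * d"
      using e(2) by (simp add: power2_eq_square)
    ultimately show ?thesis by linarith
  qed
  also have "\<dots> < (norm (s - c))\<^sup>2"
    using e(1) assms(1) by simp
  finally show ?thesis
    unfolding e_def by (rule power2_less_imp_less) simp
qed

lemma norm_le_if_obtuse:
  fixes s m y :: "'a::real_inner"
  assumes "(s - m) \<bullet> (m - y) \<ge> 0"
  shows "norm (m - y) \<le> norm (s - y)"
proof -
  have "2 * ((s - m) \<bullet> (m - y)) = (norm (s - y))\<^sup>2 - (norm (s - m))\<^sup>2 - (norm (m - y))\<^sup>2"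
    using dot_norm[of "s - m" "m - y"] by simp
  then have "(norm (m - y))\<^sup>2 \<le> (norm (s - y))\<^sup>2"
    using assms zero_le_power2[of "norm (s - m)"] by linarith
  then show ?thesis
    by (rule power2_le_imp_le) simp
qed

lemma centroid_r_diff:
  "centroid_r J x r - centroid_r J x k = (1 / (real (card J) + 1)) *\<^sub>R (x r - x k)"
  by (simp add: centroid_r_def scaleR_diff_right[symmetric])

lemma centroid_r_minus_point:
  assumes "finite J" and "J \<noteq> {}"
  shows "centroid_r J x r - x r
    = (real (card J) / (real (card J) + 1)) *\<^sub>R (centroid J x - x r)"
proof -
  define n where "n = real (card J)"
  have "n > 0" using assms by (simp add: n_def card_gt_0_iff)
  then have n1: "n + 1 \<noteq> 0" by simp
  have "(n + 1) *\<^sub>R (centroid_r J x r - x r) = n *\<^sub>R (centroid J x - x r)"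
    using \<open>n > 0\<close> by (simp add: centroid_r_def centroid_def n_def algebra_simps)
  also have "\<dots> = (n + 1) *\<^sub>R ((n / (n + 1)) *\<^sub>R (centroid J x - x r))"
    using n1 by simp
  finally show ?thesis
    using scaleR_left_imp_eq[OF n1] by (simp only: n_def)
qed

lemma sum_power2_norm_plus_diff:
  fixes x :: "'j \<Rightarrow> real^2"
  assumes "finite J"
  shows "((\<Sum>i\<in>J. (norm (u - x i))\<^sup>2) + (norm (u - x k))\<^sup>2)
       - ((\<Sum>i\<in>J. (norm (s - x i))\<^sup>2) + (norm (s - x k))\<^sup>2)
     = (real (card J) + 1) * ((norm (u - centroid_r J x k))\<^sup>2 - (norm (s - centroid_r J x k))\<^sup>2)"
proof -
  define n where "n = real (card J)"
  define c where "c = (norm u)\<^sup>2 - (norm s)\<^sup>2"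
  have Mk: "x k + (\<Sum>i\<in>J. x i) = (n + 1) *\<^sub>R centroid_r J x k"
    by (simp add: centroid_r_def n_def add_pos_nonneg)
  have "((\<Sum>i\<in>J. (norm (u - x i))\<^sup>2) + (norm (u - x k))\<^sup>2)
       - ((\<Sum>i\<in>J. (norm (s - x i))\<^sup>2) + (norm (s - x k))\<^sup>2)
     = (\<Sum>i\<in>J. c - 2 * ((u - s) \<bullet> x i)) + (c - 2 * ((u - s) \<bullet> x k))"
    by (simp add: c_def power2_norm_diff_sub_power2_norm_diff[symmetric] sum_subtractf)
  also have "\<dots> = (n + 1) * c - 2 * ((u - s) \<bullet> (x k + (\<Sum>i\<in>J. x i)))"
    by (simp add: sum_subtractf sum.distrib inner_sum_right sum_distrib_left[symmetric]
        inner_add_right n_def algebra_simps)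
  also have "\<dots> = (n + 1) * ((norm (u - centroid_r J x k))\<^sup>2 - (norm (s - centroid_r J x k))\<^sup>2)"
    by (simp add: Mk c_def power2_norm_diff_sub_power2_norm_diff algebra_simps)
  finally show ?thesis unfolding n_def .
qed

lemma qmp_P_minimiser_not_farther:
  fixes x :: "'j \<Rightarrow> real^2"
  assumes "finite J" and "J \<noteq> {}" and "\<forall>t. qmp_P J x s \<le> qmp_P J x t"
  shows "\<exists>k\<in>J. norm (s - centroid_r J x k) \<le> norm (t - centroid_r J x k)"
proof -
  let ?f = "\<lambda>u i. (norm (u - x i))\<^sup>2"
  have "Max (?f t ` J) \<in> ?f t ` J"
    using assms(1,2) by (intro Max_in) auto
  then obtain k where k: "k \<in> J" "Max (?f t ` J) = ?f t k"
    by auto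
  have "Max (?f s ` J) \<ge> ?f s k"
    using assms(1) k(1) by (intro Max_ge) auto
  moreover have "qmp_P J x s \<le> qmp_P J x t"
    using assms(3) by blast
  ultimately have "(\<Sum>i\<in>J. ?f s i) + ?f s k \<le> (\<Sum>i\<in>J. ?f t i) + ?f t k"
    using k(2) unfolding qmp_P_def by linarith
  then have "0 \<le> (real (card J) + 1)
      * ((norm (t - centroid_r J x k))\<^sup>2 - (norm (s - centroid_r J x k))\<^sup>2)"
    using sum_power2_norm_plus_diff[OF assms(1), where u = t and k = k and s = s and x = x] by linarith
  then have "(norm (s - centroid_r J x k))\<^sup>2 \<le> (norm (t - centroid_r J x k))\<^sup>2"
    by (simp add: zero_le_mult_iff add_pos_nonneg)
  then show ?thesis
    using k(1) power2_le_imp_le norm_ge_zero by blast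
qed

theorem lemma9:
  fixes J :: "'j set" and x :: "'j \<Rightarrow> real^2" and s :: "real^2" and r :: 'j
  assumes "finite J" and "J \<noteq> {}" and "inj_on x J"
    and "\<forall>t. qmp_P J x s \<le> qmp_P J x t"
    and "r \<in> J"
    and "\<forall>j\<in>J. norm (x j - centroid J x) \<le> norm (x r - centroid J x)"
  shows "norm (centroid_r J x r - x r) \<le> norm (s - x r)"
proof -
  define v where "v = x r - centroid J x"
  define n where "n = real (card J)"
  let ?M = "centroid_r J x"
  have toward_Mr: "v \<bullet> (?M r - ?M k) \<ge> 0" if "k \<in> J" for k
    using inner_nonneg_if_farthest[of "x k" _ "x r"] assms(6) that
    by (simp add: v_def centroid_r_diff)
  have step_nonpos: "v \<bullet> (s - ?M r) \<le> 0"
  proof (rule ccontr)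
    define d where "d = v \<bullet> (s - ?M r)"
    assume "\<not> ?thesis"
    then have "d > 0" by (simp add: d_def)
    have "v \<bullet> (s - ?M k) \<ge> d" if "k \<in> J" for k
      using toward_Mr[OF that] by (simp add: d_def inner_diff_right)
    then have "\<forall>k\<in>J. norm (s - (d / (v \<bullet> v)) *\<^sub>R v - ?M k) < norm (s - ?M k)"
      using norm_diff_less_step_against \<open>d > 0\<close> by blast
    then show False
      using qmp_P_minimiser_not_farther[OF assms(1,2,4)] by (meson not_less)
  qed
  have "?M r - x r = - (n / (n + 1)) *\<^sub>R v"
    using centroid_r_minus_point[OF assms(1,2)] by (simp add: v_def n_def scaleR_diff_right)
  then have "(s - ?M r) \<bullet> (?M r - x r) = - ((n / (n + 1)) * (v \<bullet> (s - ?M r)))"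
    by (simp add: inner_commute)
  moreover have "(n / (n + 1)) * (v \<bullet> (s - ?M r)) \<le> 0"
    using step_nonpos by (intro mult_nonneg_nonpos) (simp_all add: n_def)
  ultimately have "(s - ?M r) \<bullet> (?M r - x r) \<ge> 0"
    by simp
  then show ?thesis by (rule norm_le_if_obtuse)
qed

end
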